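(* Under Assumptions 1 and 2 (stated in the context), the boundary $\partial\mathcal{K}_\beta:=\operatorname{cl}(\mathcal{K}_\beta)\setminus\mathcal{K}_\beta$ satisfies $\partial\mathcal{K}_\beta\subseteq\{K\in\mathcal{K}:\|\mathbf{T}_\infty(K)\|_{\mathcal{H}_\infty}=\beta\}$.
   Context: Let $A\in\mathbb{R}^{n\times n}$, $B\in\mathbb{R}^{n\times m}$, $B_w\in\mathbb{R}^{n\times n}$, $W:=B_wB_w^{\mathsf T}$. Let $Q_2\succeq0$, $R_2\succ0$, $Q_\infty\succ0$, $R_\infty\succ0$ be symmetric weight matrices and $\beta>0$. For $K\in\mathbb{R}^{m\times n}$ write $A_K:=A+BK$. Let $\mathcal{K}:=\{K: A_K \text{ Hurwitz}\}$. For $K\in\mathcal{K}$ let $\mathbf{T}_\infty(K)(s)=\begin{bmatrix}Q_\infty^{1/2}\\ R_\infty^{1/2}K\end{bmatrix}(sI-A_K)^{-1}B_w$ and $\|\cdot\|_{\mathcal{H}_\infty}$ the $\mathcal{H}_\infty$ norm. $\mathcal{K}_\beta:=\{K\in\mathcal{K}:\|\mathbf{T}_\infty(K)\|_{\mathcal{H}_\infty}<\beta\}$. Assumption 1: $(A,B)$ stabilizable, $(Q_2^{1/2},A)$ detectable, and $\beta>\beta^\ast:=\inf_{K\in\mathcal{K}}\|\mathbf{T}_\infty(K)\|_{\mathcal{H}_\infty}$. Assumption 2: $Q_2\succeq0$ and $W,Q_\infty,R_2,R_\infty$ positive definite. *)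

theory Defs
  imports "HOL-Analysis.Analysis"
begin

definition cmat :: "real^'c^'r \<Rightarrow> complex^'c^'r" where
  "cmat M = (\<chi> i j. complex_of_real (M $ i $ j))"

definition symmetric_mat :: "real^'n^'n \<Rightarrow> bool" where
  "symmetric_mat M \<longleftrightarrow> transpose M = M"

definition psd_mat :: "real^'n^'n \<Rightarrow> bool" where
  "psd_mat M \<longleftrightarrow> symmetric_mat M \<and> (\<forall>x. 0 \<le> x \<bullet> (M *v x))"

definition pd_mat :: "real^'n^'n \<Rightarrow> bool" where
  "pd_mat M \<longleftrightarrow> symmetric_mat M \<and> (\<forall>x. x \<noteq> 0 \<longrightarrow> 0 < x \<bullet> (M *v x))"

definition msqrt :: "real^'n^'n \<Rightarrow> real^'n^'n" where
  "msqrt Q = (THE S. psd_mat S \<and> S ** S = Q)"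

definition hurwitz :: "real^'n^'n \<Rightarrow> bool" where
  "hurwitz M \<longleftrightarrow> (\<forall>(c::complex) (v::complex^'n). v \<noteq> 0 \<and> cmat M *v v = c *s v \<longrightarrow> Re c < 0)"

definition stabilizable :: "real^'n^'n \<Rightarrow> real^'m^'n \<Rightarrow> bool" where
  "stabilizable A B \<longleftrightarrow> (\<exists>K::real^'n^'m. hurwitz (A + B ** K))"

definition detectable :: "real^'n^'p \<Rightarrow> real^'n^'n \<Rightarrow> bool" where
  "detectable C A \<longleftrightarrow> (\<exists>L::real^'p^'n. hurwitz (A + L ** C))"

definition stab_set :: "real^'n^'n \<Rightarrow> real^'m^'n \<Rightarrow> (real^'n^'m) set" where
  "stab_set A B = {K. hurwitz (A + B ** K)}"

text \<open>Stacked output matrix [Q^(1/2); R^(1/2) K], indexed by 'n + 'm.\<close>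
definition out_mat :: "real^'n^'n \<Rightarrow> real^'m^'m \<Rightarrow> real^'n^'m \<Rightarrow> real^'n^('n + 'm)" where
  "out_mat Qi Ri K = (\<chi> r. case r of Inl i \<Rightarrow> msqrt Qi $ i | Inr j \<Rightarrow> (msqrt Ri ** K) $ j)"

definition T_inf :: "real^'n^'n \<Rightarrow> real^'m^'n \<Rightarrow> real^'n^'n \<Rightarrow> real^'n^'n \<Rightarrow> real^'m^'m
    \<Rightarrow> real^'n^'m \<Rightarrow> complex \<Rightarrow> complex^'n^('n + 'm)" where
  "T_inf A B Bw Qi Ri K s =
     cmat (out_mat Qi Ri K) ** matrix_inv (mat s - cmat (A + B ** K)) ** cmat Bw"

text \<open>H-infinity norm: supremum over the imaginary axis of the largest singular value
  (= induced Euclidean operator norm) of the transfer matrix.\<close>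
definition hinf_norm :: "real^'n^'n \<Rightarrow> real^'m^'n \<Rightarrow> real^'n^'n \<Rightarrow> real^'n^'n \<Rightarrow> real^'m^'m
    \<Rightarrow> real^'n^'m \<Rightarrow> real" where
  "hinf_norm A B Bw Qi Ri K =
     (SUP \<omega>::real. onorm (\<lambda>v::complex^'n. T_inf A B Bw Qi Ri K (\<i> * complex_of_real \<omega>) *v v))"

definition K_beta :: "real^'n^'n \<Rightarrow> real^'m^'n \<Rightarrow> real^'n^'n \<Rightarrow> real^'n^'n \<Rightarrow> real^'m^'m
    \<Rightarrow> real \<Rightarrow> (real^'n^'m) set" where
  "K_beta A B Bw Qi Ri \<beta> = {K \<in> stab_set A B. hinf_norm A B Bw Qi Ri K < \<beta>}"

end

theory Submission
  imports Defs "HOL-Complex_Analysis.Great_Picard"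
begin

(*
  Let K be the limit of gains K_j with A + B K_j Hurwitz and norm T(K_j) < beta.
  The characteristic polynomials det (s I - A - B K_j) have no zeros in Re s > 0 and converge
  locally uniformly to det (s I - A - B K), so by Hurwitz's theorem A + B K has no eigenvalue
  there. An eigenvalue i w with eigenvector v is excluded by the bound beta on the imaginary
  axis: the disturbances u_j = G (i w I - A - B K_j) v, where B_w G = I, tend to 0, while
  T(K_j)(i w) u_j = [Q^(1/2) v; R^(1/2) K_j v] keeps the nonzero block Q^(1/2) v. Hence K is
  stabilizing, the transfer matrices converge pointwise on the imaginary axis, so
  norm T(K) <= beta, with equality as K is not in K_beta.
*)

lemma matrix_add_rdistrib: "((A::'a::semiring_1^'n^'m) + B) ** C = A ** C + B ** C"
  by (vector matrix_matrix_mult_def sum.distrib distrib_right)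

lemma matrix_diff_rdistrib: "((A::'a::ring_1^'n^'m) - B) ** C = A ** C - B ** C"
  by (vector matrix_matrix_mult_def sum_subtractf left_diff_distrib)

lemma matrix_diff_ldistrib: "(A::'a::ring_1^'n^'m) ** (B - C) = A ** B - A ** C"
  by (vector matrix_matrix_mult_def sum_subtractf right_diff_distrib)

lemma transpose_add: "transpose ((A::'a::semiring_1^'n^'m) + B) = transpose A + transpose B"
  by (simp add: transpose_def vec_eq_iff)

lemma transpose_zero [simp]: "transpose (0::'a::semiring_1^'n^'m) = 0"
  by (simp add: transpose_def vec_eq_iff)

lemma transpose_diff: "transpose ((A::'a::ring_1^'n^'m) - B) = transpose A - transpose B"
  by (simp add: transpose_def vec_eq_iff)

lemma mat_matrix_vector_mult: "mat (s::'a::semiring_1) *v v = s *s v"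
  by (simp add: vec_eq_iff matrix_vector_mult_def mat_def if_distrib if_distribR sum.delta
      cong: if_cong)

lemma tendsto_matrix_matrix_mult [tendsto_intros]:
  fixes f :: "'b \<Rightarrow> 'a::real_normed_algebra_1^'n^'m" and g :: "'b \<Rightarrow> 'a^'k^'n"
  assumes "(f \<longlongrightarrow> A) F" "(g \<longlongrightarrow> B) F"
  shows "((\<lambda>x. f x ** g x) \<longlongrightarrow> A ** B) F"
  unfolding matrix_matrix_mult_def
  by (intro tendsto_vec_lambda tendsto_sum tendsto_mult tendsto_vec_nth assms)

lemma tendsto_matrix_vector_mult [tendsto_intros]:
  fixes f :: "'b \<Rightarrow> 'a::real_normed_algebra_1^'n^'m" and g :: "'b \<Rightarrow> 'a^'n"
  assumes "(f \<longlongrightarrow> A) F" "(g \<longlongrightarrow> v) F"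
  shows "((\<lambda>x. f x *v g x) \<longlongrightarrow> A *v v) F"
  unfolding matrix_vector_mult_def
  by (intro tendsto_vec_lambda tendsto_sum tendsto_mult tendsto_vec_nth assms)

lemma tendsto_transpose [tendsto_intros]:
  fixes f :: "'b \<Rightarrow> 'a::real_normed_algebra_1^'n^'m"
  assumes "(f \<longlongrightarrow> A) F"
  shows "((\<lambda>x. transpose (f x)) \<longlongrightarrow> transpose A) F"
  unfolding transpose_def by (intro tendsto_vec_lambda tendsto_vec_nth assms)

lemma norm_matrix_vector_mult_le_entry_sum:
  fixes N :: "'a::real_normed_algebra_1^'n^'m"
  shows "norm (N *v x) \<le> (\<Sum>i\<in>UNIV. \<Sum>j\<in>UNIV. norm (N $ i $ j)) * norm x"
proof -
  have "norm (N *v x) \<le> (\<Sum>i\<in>UNIV. norm ((N *v x) $ i))"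
    unfolding norm_vec_def by (rule L2_set_le_sum) simp
  also have "\<dots> \<le> (\<Sum>i\<in>UNIV. (\<Sum>j\<in>UNIV. norm (N $ i $ j)) * norm x)"
  proof (rule sum_mono)
    fix i
    have "norm ((N *v x) $ i) \<le> (\<Sum>j\<in>UNIV. norm (N $ i $ j * x $ j))"
      unfolding matrix_vector_mult_def by (simp add: norm_sum)
    also have "\<dots> \<le> (\<Sum>j\<in>UNIV. norm (N $ i $ j) * norm x)"
      by (intro sum_mono order_trans[OF norm_mult_ineq] mult_left_mono
          Finite_Cartesian_Product.norm_nth_le norm_ge_zero)
    finally show "norm ((N *v x) $ i) \<le> (\<Sum>j\<in>UNIV. norm (N $ i $ j)) * norm x"
      by (simp add: sum_distrib_right)
  qed
  finally show ?thesis by (simp add: sum_distrib_right)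
qed

lemma norm_matrix_le_of_operator_bound:
  fixes N :: "real^'n^'m"
  assumes "\<And>x. norm (N *v x) \<le> c * norm x"
  shows "norm N \<le> real CARD('m) * real CARD('n) * c"
proof -
  have entry: "\<bar>N $ i $ j\<bar> \<le> c" for i j
    using matrix_component_le_onorm[of N i j] onorm_le[of "(*v) N", OF assms] by linarith
  have "norm N \<le> (\<Sum>i\<in>UNIV. norm (N $ i))"
    unfolding norm_vec_def by (rule L2_set_le_sum) simp
  also have "\<dots> \<le> (\<Sum>i\<in>UNIV. \<Sum>j\<in>UNIV. \<bar>N $ i $ j\<bar>)"
    by (intro sum_mono norm_le_l1_cart)
  also have "\<dots> \<le> (\<Sum>i\<in>(UNIV::'m set). \<Sum>j\<in>(UNIV::'n set). c)"
    by (intro sum_mono entry)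
  finally show ?thesis by simp
qed

subsection \<open>Positive semidefinite square roots\<close>

lemma symmetric_inner_matrix_commute:
  fixes P :: "real^'n^'n"
  assumes "transpose P = P"
  shows "x \<bullet> (P *v y) = y \<bullet> (P *v x)"
  by (metis assms dot_lmul_matrix inner_commute transpose_matrix_vector)

lemma psd_quadratic_form_zeroD:
  fixes P :: "real^'n^'n"
  assumes psd: "psd_mat P" and y: "y \<bullet> (P *v y) = 0"
  shows "P *v y = 0"
proof -
  have sym: "transpose P = P" and nonneg: "\<And>x. 0 \<le> x \<bullet> (P *v x)"
    using psd by (auto simp: psd_mat_def symmetric_mat_def)
  define z where "z = P *v y"
  define a where "a = z \<bullet> z"
  define b where "b = z \<bullet> (P *v z)"
  have b: "0 \<le> b" using nonneg by (simp add: b_def)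
  \<comment> \<open>the form is nonnegative along the line \<open>y + t z\<close>, whose slope at \<open>t = 0\<close> is \<open>2 a\<close>\<close>
  have line: "(y + t *\<^sub>R z) \<bullet> (P *v (y + t *\<^sub>R z)) = 2 * t * a + t\<^sup>2 * b" for t
  proof -
    have "y \<bullet> (P *v z) = a"
      using symmetric_inner_matrix_commute[OF sym, of y z] by (simp add: a_def z_def)
    then show ?thesis using y
      by (simp add: algebra_simps inner_add_left inner_add_right matrix_vector_right_distrib
          power2_eq_square a_def b_def z_def)
  qed
  define t where "t = - a / (b + 1)"
  have t: "t * (b + 1) = - a" using b by (simp add: t_def)
  have "0 \<le> (2 * t * a + t\<^sup>2 * b) * (b + 1)\<^sup>2"
    using nonneg[of "y + t *\<^sub>R z"] line[of t] by simp
  also have "\<dots> = 2 * a * (t * (b + 1)) * (b + 1) + (t * (b + 1))\<^sup>2 * b"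
    by (simp add: power2_eq_square algebra_simps)
  also have "\<dots> = - (a\<^sup>2 * (b + 2))"
    unfolding t by (simp add: power2_eq_square algebra_simps)
  finally have "a\<^sup>2 * (b + 2) \<le> 0" by simp
  then have "a = 0" using b by (simp add: mult_le_0_iff)
  then show ?thesis by (simp add: a_def z_def)
qed

lemma psd_commuting_squares_eq:
  fixes S S' :: "real^'n^'n"
  assumes psd: "psd_mat S" "psd_mat S'" and sq: "S ** S = S' ** S'" and comm: "S ** S' = S' ** S"
  shows "S = S'"
proof -
  define D where "D = S - S'"
  have symD: "transpose D = D"
    using psd by (simp add: D_def transpose_diff psd_mat_def symmetric_mat_def)
  have sum_D: "(S + S') ** D = 0"
    by (simp add: D_def matrix_add_rdistrib matrix_diff_ldistrib sq comm)
  have "D *v x = 0" for x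
  proof -
    define y where "y = D *v x"
    have "y \<bullet> (S *v y) + y \<bullet> (S' *v y) = y \<bullet> ((S + S') *v y)"
      by (simp add: matrix_vector_mult_add_rdistrib inner_add_right)
    also have "\<dots> = 0" by (simp add: y_def matrix_vector_mul_assoc sum_D)
    finally have "y \<bullet> (S *v y) = 0" "y \<bullet> (S' *v y) = 0"
      using psd by (auto simp: psd_mat_def add_nonneg_eq_0_iff)
    then have "S *v y = 0" "S' *v y = 0" using psd psd_quadratic_form_zeroD by blast+
    then have "D *v y = 0" by (simp add: D_def matrix_vector_mult_diff_rdistrib)
    then have "y \<bullet> y = 0"
      using symmetric_inner_matrix_commute[OF symD, of y x] by (simp add: y_def)
    then show ?thesis by (simp add: y_def)
  qed
  then show ?thesis by (simp add: D_def matrix_eq matrix_vector_mult_diff_rdistrib)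
qed

lemma pd_quadratic_form_lower_bound:
  fixes Q :: "real^'n^'n"
  assumes "pd_mat Q"
  obtains m where "0 < m" "\<And>x. m * (norm x)\<^sup>2 \<le> x \<bullet> (Q *v x)"
proof -
  have cont: "continuous_on (sphere 0 1) (\<lambda>x::real^'n. x \<bullet> (Q *v x))"
    by (intro continuous_intros)
  have "axis undefined 1 \<in> sphere (0::real^'n) 1" by (simp add: norm_axis_1)
  then obtain u where u: "u \<in> sphere 0 1"
    and min: "\<And>x. x \<in> sphere 0 1 \<Longrightarrow> u \<bullet> (Q *v u) \<le> x \<bullet> (Q *v x)"
    using continuous_attains_inf[OF compact_sphere _ cont] by blast
  show ?thesis
  proof
    have "u \<noteq> 0" using u by auto
    then show "0 < u \<bullet> (Q *v u)" using assms by (simp add: pd_mat_def)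
  next
    fix x :: "real^'n"
    show "u \<bullet> (Q *v u) * (norm x)\<^sup>2 \<le> x \<bullet> (Q *v x)"
    proof (cases "x = 0")
      case False
      define w where "w = (1 / norm x) *\<^sub>R x"
      have "x \<bullet> (Q *v x) = (norm x)\<^sup>2 * (w \<bullet> (Q *v w))"
        using False by (simp add: w_def matrix_vector_mult_scaleR power2_eq_square)
      moreover have "u \<bullet> (Q *v u) \<le> w \<bullet> (Q *v w)" using False by (intro min) (simp add: w_def)
      ultimately show ?thesis by (metis mult.commute mult_right_mono zero_le_power2)
    qed simp
  qed
qed

lemma pd_shift_contraction:
  fixes Q :: "real^'n^'n"
  assumes "pd_mat Q"
  obtains c \<rho> where "0 < c" "0 \<le> \<rho>" "\<rho> < 1"
    "\<And>x. norm ((mat 1 - (1 / c) *\<^sub>R Q) *v x) \<le> \<rho> * norm x"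
proof -
  obtain m where m: "0 < m" "\<And>x. m * (norm x)\<^sup>2 \<le> x \<bullet> (Q *v x)"
    using pd_quadratic_form_lower_bound[OF assms] by blast
  obtain M where M: "0 < M" "\<And>x. norm (Q *v x) \<le> norm x * M"
    using bounded_linear.pos_bounded[OF matrix_vector_mul_bounded_linear] by blast
  define c where "c = M\<^sup>2 / m"
  define \<rho> where "\<rho> = sqrt (max 0 (1 - m / c))"
  have c: "0 < c" using m M by (simp add: c_def)
  have \<rho>: "0 \<le> \<rho>" "\<rho> < 1" using m c by (auto simp: \<rho>_def max_def)
  have sq: "(norm ((mat 1 - (1 / c) *\<^sub>R Q) *v x))\<^sup>2 \<le> (\<rho> * norm x)\<^sup>2" for x
  proof -
    have "(norm ((mat 1 - (1 / c) *\<^sub>R Q) *v x))\<^sup>2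
        = (norm x)\<^sup>2 - 2 / c * (x \<bullet> (Q *v x)) + (norm (Q *v x))\<^sup>2 / c\<^sup>2"
      unfolding power2_norm_eq_inner
      by (simp add: matrix_vector_mult_diff_rdistrib scaleR_matrix_vector_assoc[symmetric]
          inner_diff_left inner_diff_right inner_commute power2_eq_square)
    also have "\<dots> \<le> (norm x)\<^sup>2 - 2 / c * (m * (norm x)\<^sup>2) + (norm x * M)\<^sup>2 / c\<^sup>2"
      using m(2)[of x] M(2)[of x] c
      by (intro add_mono diff_mono divide_right_mono power_mono mult_left_mono) auto
    also have "\<dots> = (1 - m / c) * (norm x)\<^sup>2"
      using m M by (simp add: c_def power2_eq_square field_simps)
    also have "\<dots> \<le> (\<rho> * norm x)\<^sup>2"
      by (simp add: \<rho>_def power_mult_distrib mult_right_mono)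
    finally show ?thesis .
  qed
  have "norm ((mat 1 - (1 / c) *\<^sub>R Q) *v x) \<le> \<rho> * norm x" for x
    by (rule power2_le_imp_le[OF sq]) (use \<rho>(1) in simp)
  with c \<rho> show ?thesis by (rule that)
qed

text \<open>The iteration \<open>T \<mapsto> (X + T\<^sup>2) / 2\<close> converges to \<open>I - (I - X)\<^sup>1\<^sup>/\<^sup>2\<close>; it is
  the square root iteration for \<open>I - X\<close> written in terms of \<open>T = I - S\<close>.\<close>

primrec sqrt_iter :: "real^'n^'n \<Rightarrow> nat \<Rightarrow> real^'n^'n" where
  "sqrt_iter X 0 = 0"
| "sqrt_iter X (Suc k) = (1/2) *\<^sub>R (X + sqrt_iter X k ** sqrt_iter X k)"

lemma sqrt_iter_bound:
  fixes X :: "real^'n^'n"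
  assumes X: "\<And>x. norm (X *v x) \<le> \<rho> * norm x" and r: "0 \<le> r" "\<rho> + r\<^sup>2 \<le> 2 * r"
  shows "norm (sqrt_iter X k *v x) \<le> r * norm x"
proof (induction k arbitrary: x)
  case (Suc k)
  let ?T = "sqrt_iter X k"
  have "norm (sqrt_iter X (Suc k) *v x) = norm (X *v x + ?T *v (?T *v x)) / 2"
    by (simp add: scaleR_matrix_vector_assoc[symmetric] matrix_vector_mult_add_rdistrib
        matrix_vector_mul_assoc)
  also have "\<dots> \<le> (\<rho> * norm x + r * (r * norm x)) / 2"
    using Suc.IH[of "?T *v x"] mult_left_mono[OF Suc.IH[of x] r(1)] X[of x]
    by (intro divide_right_mono order_trans[OF norm_triangle_ineq]) auto
  also have "\<dots> \<le> r * norm x"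
    using mult_right_mono[OF r(2) norm_ge_zero[of x]] by (simp add: power2_eq_square algebra_simps)
  finally show ?case .
qed (use r in simp)

lemma sqrt_iter_symmetric: "transpose X = X \<Longrightarrow> transpose (sqrt_iter X k) = sqrt_iter X k"
  by (induction k) (simp_all add: transpose_scalar transpose_add matrix_transpose_mul)

lemma sqrt_iter_commute:
  assumes "Y ** X = X ** Y"
  shows "Y ** sqrt_iter X k = sqrt_iter X k ** Y"
proof (induction k)
  case (Suc k)
  let ?T = "sqrt_iter X k"
  have "Y ** (?T ** ?T) = ?T ** (?T ** Y)"
    by (metis Suc.IH matrix_mul_assoc)
  then show ?case
    using assms by (simp add: matrix_scalar_ac matrix_add_ldistrib matrix_add_rdistrib
        scalar_matrix_assoc[symmetric] matrix_mul_assoc scaleR_right_distrib)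
qed simp

lemma sqrt_iter_step_bound:
  fixes X :: "real^'n^'n"
  assumes X: "\<And>x. norm (X *v x) \<le> \<rho> * norm x" and r: "0 \<le> r" "\<rho> + r\<^sup>2 \<le> 2 * r"
  shows "norm ((sqrt_iter X (Suc k) - sqrt_iter X k) *v x) \<le> r ^ Suc k * norm x"
proof (induction k arbitrary: x)
  case 0
  show ?case using sqrt_iter_bound[OF assms, of 1 x] by simp
next
  case (Suc k)
  let ?A = "sqrt_iter X (Suc k)" and ?B = "sqrt_iter X k"
  note bound = sqrt_iter_bound[OF assms]
  have step: "(1/2) *\<^sub>R (X + V ** V) - (1/2) *\<^sub>R (X + W ** W)
      = (1/2) *\<^sub>R (V ** (V - W) + (V - W) ** W)" for V W :: "real^'n^'n"
    by (simp add: matrix_diff_ldistrib matrix_diff_rdistrib scaleR_right_distrib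
        scaleR_diff_right)
  have "sqrt_iter X (Suc (Suc k)) - ?A = (1/2) *\<^sub>R (?A ** (?A - ?B) + (?A - ?B) ** ?B)"
    unfolding step[symmetric] by simp
  then have "norm ((sqrt_iter X (Suc (Suc k)) - ?A) *v x)
      = norm (?A *v ((?A - ?B) *v x) + (?A - ?B) *v (?B *v x)) / 2"
    by (simp add: scaleR_matrix_vector_assoc[symmetric] matrix_vector_mult_add_rdistrib
        matrix_vector_mul_assoc del: sqrt_iter.simps(2))
  also have "\<dots> \<le> (r * (r ^ Suc k * norm x) + r ^ Suc k * (r * norm x)) / 2"
    using order_trans[OF bound[of "Suc k"] mult_left_mono[OF Suc.IH r(1)]]
      order_trans[OF Suc.IH mult_left_mono[OF bound[of k x]]] r(1)
    by (intro divide_right_mono order_trans[OF norm_triangle_ineq] add_mono) auto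
  also have "\<dots> = r ^ Suc (Suc k) * norm x" by (simp add: algebra_simps)
  finally show ?case .
qed

lemma sqrt_iter_convergent:
  fixes X :: "real^'n^'n"
  assumes X: "\<And>x. norm (X *v x) \<le> \<rho> * norm x" and r: "0 \<le> r" "\<rho> + r\<^sup>2 \<le> 2 * r" "r < 1"
  shows "convergent (sqrt_iter X)"
proof -
  define f where "f k = sqrt_iter X (Suc k) - sqrt_iter X k" for k
  define C where "C = real CARD('n) * real CARD('n)"
  have "summable (\<lambda>k. C * (r * r ^ k))" using r by (intro summable_mult summable_geometric) simp
  moreover have "norm (f k) \<le> C * (r * r ^ k)" for k
    using norm_matrix_le_of_operator_bound[OF sqrt_iter_step_bound[OF X r(1,2)]]
    by (simp add: f_def C_def)
  ultimately have "summable f" by (rule summable_comparison_test')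
  moreover have "(\<Sum>i<k. f i) = sqrt_iter X k" for k
    unfolding f_def by (subst sum_lessThan_telescope) simp
  ultimately have "sqrt_iter X \<longlonglongrightarrow> suminf f" using summable_LIMSEQ[of f] by simp
  then show ?thesis by (rule convergentI)
qed

lemma sqrt_iter_fixpoint:
  fixes X :: "real^'n^'n"
  assumes sym: "transpose X = X" and X: "\<And>x. norm (X *v x) \<le> \<rho> * norm x"
    and \<rho>: "0 \<le> \<rho>" "\<rho> < 1"
  obtains T where "transpose T = T" "2 *\<^sub>R T = X + T ** T" "\<And>x. norm (T *v x) \<le> norm x"
    "\<And>Y. Y ** X = X ** Y \<Longrightarrow> Y ** T = T ** Y"
proof -
  define r where "r = (1 + \<rho>) / 2"
  have r: "0 \<le> r" "\<rho> + r\<^sup>2 \<le> 2 * r" "r < 1"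
  proof -
    have "(1 - \<rho>) * (1 - \<rho>) \<le> 4 * (1 - \<rho>)" using \<rho> by (intro mult_right_mono) auto
    then show "\<rho> + r\<^sup>2 \<le> 2 * r" by (simp add: r_def power2_eq_square field_simps)
  qed (use \<rho> in \<open>auto simp: r_def\<close>)
  obtain T where lim: "sqrt_iter X \<longlonglongrightarrow> T"
    using sqrt_iter_convergent[OF X r] by (auto simp: convergent_def)
  show ?thesis
  proof
    have "(\<lambda>k. transpose (sqrt_iter X k)) \<longlonglongrightarrow> transpose T" by (intro tendsto_intros lim)
    then have "sqrt_iter X \<longlonglongrightarrow> transpose T" by (simp add: sqrt_iter_symmetric[OF sym])
    then show "transpose T = T" using lim by (rule LIMSEQ_unique)
  next
    have "(\<lambda>k. sqrt_iter X (Suc k)) \<longlonglongrightarrow> (1/2) *\<^sub>R (X + T ** T)"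
      unfolding sqrt_iter.simps by (intro tendsto_intros lim)
    then have "T = (1/2) *\<^sub>R (X + T ** T)" using LIMSEQ_unique[OF LIMSEQ_Suc[OF lim]] by blast
    from arg_cong[OF this, of "(*\<^sub>R) 2"] show "2 *\<^sub>R T = X + T ** T" by simp
  next
    fix x
    have T: "(\<lambda>k. norm (sqrt_iter X k *v x)) \<longlonglongrightarrow> norm (T *v x)" by (intro tendsto_intros lim)
    have "norm (sqrt_iter X k *v x) \<le> norm x" for k
      using sqrt_iter_bound[OF X r(1,2), of k x] r(3) mult_right_mono[of r 1 "norm x"] by simp
    then show "norm (T *v x) \<le> norm x" by (intro LIMSEQ_le_const2[OF T]) blast
  next
    fix Y assume "Y ** X = X ** Y"
    then have "(\<lambda>k. Y ** sqrt_iter X k) = (\<lambda>k. sqrt_iter X k ** Y)" by (simp add: sqrt_iter_commute)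
    moreover have "(\<lambda>k. Y ** sqrt_iter X k) \<longlonglongrightarrow> Y ** T" "(\<lambda>k. sqrt_iter X k ** Y) \<longlonglongrightarrow> T ** Y"
      by (intro tendsto_intros lim)+
    ultimately show "Y ** T = T ** Y" using LIMSEQ_unique by metis
  qed
qed

lemma pd_sqrt_exists:
  fixes Q :: "real^'n^'n"
  assumes "pd_mat Q"
  obtains S where "psd_mat S" "S ** S = Q" "\<And>Y. Y ** Q = Q ** Y \<Longrightarrow> Y ** S = S ** Y"
proof -
  obtain c \<rho> where c: "0 < c" and \<rho>: "0 \<le> \<rho>" "\<rho> < 1"
    and X: "\<And>x. norm ((mat 1 - (1 / c) *\<^sub>R Q) *v x) \<le> \<rho> * norm x"
    using pd_shift_contraction[OF assms] by blast
  define X where "X = mat 1 - (1 / c) *\<^sub>R Q"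
  have symX: "transpose X = X"
    using assms by (simp add: X_def transpose_diff transpose_scalar pd_mat_def symmetric_mat_def)
  obtain T where symT: "transpose T = T" and fixpoint: "2 *\<^sub>R T = X + T ** T"
    and T: "\<And>x. norm (T *v x) \<le> norm x" and comm: "\<And>Y. Y ** X = X ** Y \<Longrightarrow> Y ** T = T ** Y"
    using sqrt_iter_fixpoint[OF symX X[folded X_def] \<rho>] by blast
  define S where "S = sqrt c *\<^sub>R (mat 1 - T)"
  show ?thesis
  proof
    have "x \<bullet> (T *v x) \<le> x \<bullet> x" for x
      using norm_cauchy_schwarz[of x "T *v x"] mult_left_mono[OF T[of x] norm_ge_zero[of x]]
      by (simp add: norm_eq_sqrt_inner[symmetric] power2_eq_square dot_square_norm)
    then show "psd_mat S"
      using c by (simp add: psd_mat_def symmetric_mat_def S_def transpose_scalar transpose_diff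
          symT scaleR_matrix_vector_assoc[symmetric] matrix_vector_mult_diff_rdistrib inner_diff_right)
  next
    have "(mat 1 - T) ** (mat 1 - T) = mat 1 - X"
      using fixpoint by (simp add: matrix_diff_ldistrib matrix_diff_rdistrib scaleR_2 algebra_simps)
    then show "S ** S = Q"
      using c by (simp add: S_def X_def matrix_scalar_ac scalar_matrix_assoc[symmetric])
  next
    fix Y assume "Y ** Q = Q ** Y"
    then have "Y ** X = X ** Y"
      by (simp add: X_def matrix_diff_ldistrib matrix_diff_rdistrib matrix_scalar_ac
          scalar_matrix_assoc[symmetric])
    then show "Y ** S = S ** Y"
      using comm by (simp add: S_def matrix_diff_ldistrib matrix_diff_rdistrib matrix_scalar_ac
          scalar_matrix_assoc[symmetric] scaleR_diff_right)
  qed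
qed

lemma pd_sqrt_ex1:
  fixes Q :: "real^'n^'n"
  assumes "pd_mat Q"
  shows "\<exists>!S. psd_mat S \<and> S ** S = Q"
proof -
  obtain S where S: "psd_mat S" "S ** S = Q" and comm: "\<And>Y. Y ** Q = Q ** Y \<Longrightarrow> Y ** S = S ** Y"
    using pd_sqrt_exists[OF assms] by blast
  have "S' = S" if "psd_mat S'" "S' ** S' = Q" for S'
  proof (rule psd_commuting_squares_eq[OF that(1) S(1)])
    show "S' ** S' = S ** S" using S that by simp
    have "S' ** Q = Q ** S'" using that(2) by (metis matrix_mul_assoc)
    then show "S' ** S = S ** S'" by (rule comm)
  qed
  then show ?thesis using S by blast
qed

lemma msqrt:
  fixes Q :: "real^'n^'n"
  assumes "pd_mat Q"
  shows "psd_mat (msqrt Q)" "msqrt Q ** msqrt Q = Q"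
  using theI'[OF pd_sqrt_ex1[OF assms]] unfolding msqrt_def by auto

lemma msqrt_mult_eq_0_iff:
  fixes Q :: "real^'n^'n"
  assumes "pd_mat Q"
  shows "msqrt Q *v x = 0 \<longleftrightarrow> x = 0"
proof
  assume "msqrt Q *v x = 0"
  then have "x \<bullet> (Q *v x) = 0" by (metis msqrt(2)[OF assms] matrix_vector_mul_assoc
        matrix_vector_mult_0_right inner_zero_right)
  then show "x = 0" using assms by (auto simp: pd_mat_def)
qed simp

subsection \<open>Resolvents of Hurwitz matrices\<close>

lemma cmat_nth [simp]: "cmat M $ i $ j = complex_of_real (M $ i $ j)"
  by (simp add: cmat_def)

lemma cmat_mult: "cmat (A ** B) = cmat A ** cmat B"
  by (simp add: vec_eq_iff matrix_matrix_mult_def)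

lemma cmat_mat_1 [simp]: "cmat (mat 1) = mat 1"
  by (simp add: vec_eq_iff mat_def)

lemma tendsto_cmat [tendsto_intros]:
  "(f \<longlongrightarrow> M) F \<Longrightarrow> ((\<lambda>x. cmat (f x)) \<longlongrightarrow> cmat M) F"
  unfolding cmat_def by (intro tendsto_vec_lambda tendsto_of_real tendsto_vec_nth)

lemma cmat_ker_zero:
  fixes S :: "real^'n^'m"
  assumes ker: "\<And>x. S *v x = 0 \<Longrightarrow> x = 0" and v: "cmat S *v v = 0"
  shows "v = 0"
proof -
  have "(S *v (\<chi> i. Re (v $ i))) $ k = Re ((cmat S *v v) $ k)"
    "(S *v (\<chi> i. Im (v $ i))) $ k = Im ((cmat S *v v) $ k)" for k
    by (simp_all add: matrix_vector_mult_def Re_sum Im_sum)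
  then have "S *v (\<chi> i. Re (v $ i)) = 0" "S *v (\<chi> i. Im (v $ i)) = 0"
    using v by (simp_all add: vec_eq_iff)
  then have "(\<chi> i. Re (v $ i)) = 0" "(\<chi> i. Im (v $ i)) = 0" using ker by blast+
  then show ?thesis by (simp add: vec_eq_iff complex_eq_iff)
qed

lemma mat_minus_cmat_nth: "(mat s - cmat X) $ i $ j = of_bool (i = j) * s - complex_of_real (X $ i $ j)"
  by (simp add: mat_def)

lemma norm_vector_scalar_mult: "norm ((c::complex) *s v) = norm c * norm (v::complex^'n)"
  by (simp add: norm_vec_def norm_mult L2_set_right_distrib)

lemma invertible_ker_zero:
  fixes M :: "'a::field^'n^'n"
  shows "(\<And>v. M *v v = 0 \<Longrightarrow> v = 0) \<Longrightarrow> invertible M"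
  by (meson invertible_left_inverse matrix_left_invertible_ker)

lemma invertible_matrix_inv:
  assumes "invertible M"
  shows "M ** matrix_inv M = mat 1" "matrix_inv M ** M = mat 1"
  using someI_ex[OF assms[unfolded invertible_def]] unfolding matrix_inv_def by auto

lemma invertible_bounded_below:
  fixes M :: "complex^'n^'n"
  assumes "invertible M"
  obtains \<delta> where "0 < \<delta>" "\<And>x. \<delta> * norm x \<le> norm (M *v x)"
proof -
  obtain L where L: "0 < L" "\<And>y. norm (matrix_inv M *v y) \<le> norm y * L"
    using bounded_linear.pos_bounded[OF matrix_vector_mul_bounded_linear] by blast
  show ?thesis
  proof
    show "0 < 1 / L" using L by simp
    fix x
    have "norm x \<le> norm (M *v x) * L"
      using L(2)[of "M *v x"] by (simp add: matrix_vector_mul_assoc invertible_matrix_inv[OF assms])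
    then show "1 / L * norm x \<le> norm (M *v x)" using L by (simp add: field_simps)
  qed
qed

lemma norm_resolvent_ge:
  fixes M :: "complex^'n^'n"
  assumes "\<And>v. norm (M *v v) \<le> norm v * L"
  shows "(norm s - L) * norm v \<le> norm ((mat s - M) *v v)"
  using norm_triangle_ineq2[of "s *s v" "M *v v"] assms[of v]
  by (simp add: matrix_vector_mult_diff_rdistrib mat_matrix_vector_mult norm_vector_scalar_mult
      algebra_simps)

lemma hurwitz_resolvent_ker_zero:
  assumes "hurwitz M" "0 \<le> Re s" "(mat s - cmat M) *v v = 0"
  shows "v = 0"
proof (rule ccontr)
  assume "v \<noteq> 0"
  moreover have "cmat M *v v = s *s v"
    using assms(3) by (simp add: matrix_vector_mult_diff_rdistrib mat_matrix_vector_mult)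
  ultimately have "Re s < 0" using assms(1) unfolding hurwitz_def by blast
  with assms(2) show False by simp
qed

lemma hurwitz_resolvent_invertible: "hurwitz M \<Longrightarrow> 0 \<le> Re s \<Longrightarrow> invertible (mat s - cmat M)"
  by (intro invertible_ker_zero) (rule hurwitz_resolvent_ker_zero)

text \<open>Compactness of a bounded piece of the imaginary axis, times the unit sphere; far out
  on the axis the shift \<open>s I\<close> dominates.\<close>

lemma hurwitz_resolvent_uniformly_bounded_below:
  fixes M :: "real^'n^'n"
  assumes hur: "hurwitz M"
  obtains \<delta> where "0 < \<delta>"
    "\<And>\<omega> v. \<delta> * norm v \<le> norm ((mat (\<i> * complex_of_real \<omega>) - cmat M) *v v)"
proof -
  obtain L where L: "0 < L" "\<And>v. norm (cmat M *v v) \<le> norm v * L"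
    using bounded_linear.pos_bounded[OF matrix_vector_mul_bounded_linear] by blast
  define F where "F p = norm ((mat (\<i> * complex_of_real (fst p)) - cmat M) *v snd p)"
    for p :: "real \<times> (complex^'n)"
  define D where "D = {-(L + 1)..L + 1} \<times> sphere (0::complex^'n) 1"
  have "compact D" unfolding D_def by (intro compact_Times compact_Icc compact_sphere)
  moreover have "(0, axis undefined 1) \<in> D" using L by (simp add: D_def norm_axis_1)
  moreover have "continuous_on D F"
    unfolding F_def matrix_vector_mult_def mat_minus_cmat_nth
    by (intro continuous_intros continuous_on_vec_lambda)
  ultimately obtain p0 where p0: "p0 \<in> D" and min: "\<And>p. p \<in> D \<Longrightarrow> F p0 \<le> F p"
    using continuous_attains_inf[of D F] by blast
  have "snd p0 \<noteq> 0" using p0 by (auto simp: D_def)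
  then have F0: "0 < F p0"
    using hurwitz_resolvent_ker_zero[OF hur, of "\<i> * complex_of_real (fst p0)" "snd p0"]
    by (auto simp: F_def)
  define \<delta> where "\<delta> = min (F p0) 1"
  show ?thesis
  proof
    show "0 < \<delta>" using F0 by (simp add: \<delta>_def)
    fix \<omega> and v :: "complex^'n"
    show "\<delta> * norm v \<le> norm ((mat (\<i> * complex_of_real \<omega>) - cmat M) *v v)"
    proof (cases "v = 0")
      case False
      define u where "u = (1 / norm v) *\<^sub>R v"
      have u: "norm u = 1" and v: "v = norm v *\<^sub>R u" using False by (simp_all add: u_def)
      have "\<delta> \<le> F (\<omega>, u)"
      proof (cases "\<bar>\<omega>\<bar> \<le> L + 1")
        case True
        then show ?thesis using min[of "(\<omega>, u)"] u by (simp add: D_def \<delta>_def abs_le_iff)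
      next
        case False
        then show ?thesis
          using norm_resolvent_ge[of "cmat M" L "\<i> * complex_of_real \<omega>" u] L(2) u
          by (simp add: F_def \<delta>_def norm_mult)
      qed
      moreover have "norm ((mat (\<i> * complex_of_real \<omega>) - cmat M) *v v) = norm v * F (\<omega>, u)"
        by (subst v) (simp add: F_def linear_scale[OF matrix_vector_mul_linear])
      ultimately show ?thesis by (metis mult.commute mult_right_mono norm_ge_zero)
    qed simp
  qed
qed

lemma tendsto_out_mat [tendsto_intros]:
  assumes "(f \<longlongrightarrow> K) F"
  shows "((\<lambda>x. out_mat Qi Ri (f x)) \<longlongrightarrow> out_mat Qi Ri K) F"
  unfolding out_mat_def
proof (rule tendsto_vec_lambda)
  fix r
  show "((\<lambda>x. case r of Inl i \<Rightarrow> msqrt Qi $ i | Inr j \<Rightarrow> (msqrt Ri ** f x) $ j) \<longlongrightarrow>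
      (case r of Inl i \<Rightarrow> msqrt Qi $ i | Inr j \<Rightarrow> (msqrt Ri ** K) $ j)) F"
    by (cases r) (auto intro!: tendsto_intros assms)
qed

lemma T_inf_apply:
  "T_inf A B Bw Qi Ri K s *v v
     = cmat (out_mat Qi Ri K) *v (matrix_inv (mat s - cmat (A + B ** K)) *v (cmat Bw *v v))"
  by (simp add: T_inf_def matrix_vector_mul_assoc matrix_mul_assoc)

lemma bdd_above_T_inf_onorm:
  assumes hur: "hurwitz (A + B ** K)"
  shows "bdd_above (range (\<lambda>\<omega>. onorm (\<lambda>v. T_inf A B Bw Qi Ri K (\<i> * complex_of_real \<omega>) *v v)))"
proof -
  obtain \<delta> where \<delta>: "0 < \<delta>"
    "\<And>\<omega> v. \<delta> * norm v \<le> norm ((mat (\<i> * complex_of_real \<omega>) - cmat (A + B ** K)) *v v)"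
    using hurwitz_resolvent_uniformly_bounded_below[OF hur] by blast
  obtain LC where LC: "0 < LC" "\<And>v. norm (cmat (out_mat Qi Ri K) *v v) \<le> norm v * LC"
    using bounded_linear.pos_bounded[OF matrix_vector_mul_bounded_linear] by blast
  obtain LB where LB: "0 < LB" "\<And>v. norm (cmat Bw *v v) \<le> norm v * LB"
    using bounded_linear.pos_bounded[OF matrix_vector_mul_bounded_linear] by blast
  have "onorm (\<lambda>v. T_inf A B Bw Qi Ri K (\<i> * complex_of_real \<omega>) *v v) \<le> LC * LB / \<delta>" for \<omega>
  proof (rule onorm_bound)
    show "0 \<le> LC * LB / \<delta>" using LC LB \<delta> by simp
    fix v
    let ?M = "mat (\<i> * complex_of_real \<omega>) - cmat (A + B ** K)"
    define z where "z = matrix_inv ?M *v (cmat Bw *v v)"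
    have "\<delta> * norm z \<le> norm (cmat Bw *v v)"
      using \<delta>(2)[where \<omega>=\<omega> and v=z] hurwitz_resolvent_invertible[OF hur, of "\<i> * complex_of_real \<omega>"]
      by (simp add: z_def matrix_vector_mul_assoc matrix_mul_assoc invertible_matrix_inv)
    then have "\<delta> * norm z \<le> norm v * LB" using LB(2) order_trans by blast
    then have "norm z * LC \<le> LC * LB / \<delta> * norm v"
      using \<delta> LC by (simp add: field_simps mult_left_mono)
    then show "norm (T_inf A B Bw Qi Ri K (\<i> * complex_of_real \<omega>) *v v) \<le> LC * LB / \<delta> * norm v"
      using LC(2)[of z] by (simp add: T_inf_apply z_def)
  qed
  then show ?thesis by (intro bdd_aboveI) auto
qed

lemma onorm_T_inf_le_hinf_norm:
  "hurwitz (A + B ** K) \<Longrightarrow>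
    onorm (\<lambda>v. T_inf A B Bw Qi Ri K (\<i> * complex_of_real \<omega>) *v v) \<le> hinf_norm A B Bw Qi Ri K"
  unfolding hinf_norm_def by (rule cSUP_upper[OF UNIV_I bdd_above_T_inf_onorm])

subsection \<open>Limits of stabilizing gains\<close>

lemma tendsto_linear_solution:
  fixes Ms :: "'b \<Rightarrow> complex^'n^'n"
  assumes lim: "(Ms \<longlongrightarrow> M) F" and inv: "invertible M"
    and sol: "\<And>j. Ms j *v zs j = y" "M *v z = y"
  shows "(zs \<longlongrightarrow> z) F"
proof -
  obtain \<delta> where \<delta>: "0 < \<delta>" "\<And>x. \<delta> * norm x \<le> norm (M *v x)"
    using invertible_bounded_below[OF inv] by blast
  define e where "e j = (\<Sum>i\<in>UNIV. \<Sum>k\<in>UNIV. norm ((Ms j - M) $ i $ k))" for j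
  have "((\<lambda>j. Ms j - M) \<longlongrightarrow> 0) F" using lim by (rule LIM_zero)
  then have "(e \<longlongrightarrow> (\<Sum>i\<in>UNIV. \<Sum>k\<in>UNIV. norm ((0::complex^'n^'n) $ i $ k))) F"
    unfolding e_def by (intro tendsto_intros)
  then have e: "(e \<longlongrightarrow> 0) F" by simp
  have "\<forall>\<^sub>F j in F. e j < \<delta> / 2" using \<delta>(1) by (intro order_tendstoD(2)[OF e]) simp
  then have "\<forall>\<^sub>F j in F. norm (zs j - z) \<le> 2 / \<delta> * (e j * norm z)"
  proof eventually_elim
    case (elim j)
    have "\<delta> * norm (zs j - z) \<le> norm (M *v (zs j - z))" by (rule \<delta>(2))
    also have "M *v (zs j - z) = - ((Ms j - M) *v zs j)"
      using sol by (simp add: matrix_vector_mult_diff_distrib matrix_vector_mult_diff_rdistrib)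
    also have "norm \<dots> \<le> e j * norm (zs j)"
      unfolding norm_minus_cancel e_def by (rule norm_matrix_vector_mult_le_entry_sum)
    also have "\<dots> \<le> e j * (norm (zs j - z) + norm z)"
      using norm_triangle_sub[of "zs j" z] by (intro mult_left_mono) (auto simp: e_def sum_nonneg)
    finally have "\<delta> * norm (zs j - z) \<le> e j * norm (zs j - z) + e j * norm z"
      by (simp add: algebra_simps)
    moreover have "e j * norm (zs j - z) \<le> \<delta> / 2 * norm (zs j - z)"
      using elim by (intro mult_right_mono) auto
    ultimately show ?case using \<delta>(1) by (simp add: field_simps)
  qed
  moreover have "((\<lambda>j. 2 / \<delta> * (e j * norm z)) \<longlongrightarrow> 0) F"
    using tendsto_mult_left_zero[OF e] by (intro tendsto_mult_right_zero) auto
  ultimately have "((\<lambda>j. zs j - z) \<longlongrightarrow> 0) F" by (rule Lim_null_comparison)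
  then show ?thesis by (rule LIM_zero_cancel)
qed

lemma onorm_T_inf_limit_le:
  assumes lim: "Ks \<longlonglongrightarrow> K" and hur: "\<And>j. hurwitz (A + B ** Ks j)" "hurwitz (A + B ** K)"
    and s: "0 \<le> Re s" and \<beta>: "0 \<le> \<beta>"
    and bound: "\<And>j. onorm (\<lambda>v. T_inf A B Bw Qi Ri (Ks j) s *v v) \<le> \<beta>"
  shows "onorm (\<lambda>v. T_inf A B Bw Qi Ri K s *v v) \<le> \<beta>"
proof (rule onorm_bound[OF \<beta>])
  fix v
  let ?M = "\<lambda>K. mat s - cmat (A + B ** K)"
  define zs where "zs j = matrix_inv (?M (Ks j)) *v (cmat Bw *v v)" for j
  define z where "z = matrix_inv (?M K) *v (cmat Bw *v v)"
  have "zs \<longlonglongrightarrow> z"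
  proof (rule tendsto_linear_solution)
    show "(\<lambda>j. ?M (Ks j)) \<longlonglongrightarrow> ?M K" by (intro tendsto_intros lim)
    show "invertible (?M K)" by (rule hurwitz_resolvent_invertible[OF hur(2) s])
    show "?M (Ks j) *v zs j = cmat Bw *v v" "?M K *v z = cmat Bw *v v" for j
      using hurwitz_resolvent_invertible[OF hur(1) s] hurwitz_resolvent_invertible[OF hur(2) s]
      by (simp_all add: zs_def z_def matrix_vector_mul_assoc matrix_mul_assoc invertible_matrix_inv)
  qed
  then have T: "(\<lambda>j. norm (T_inf A B Bw Qi Ri (Ks j) s *v v)) \<longlonglongrightarrow> norm (T_inf A B Bw Qi Ri K s *v v)"
    unfolding T_inf_apply zs_def[symmetric] z_def[symmetric] by (intro tendsto_intros lim)
  have "norm (T_inf A B Bw Qi Ri (Ks j) s *v v) \<le> \<beta> * norm v" for j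
    using onorm[OF matrix_vector_mul_bounded_linear, of "T_inf A B Bw Qi Ri (Ks j) s" v]
      mult_right_mono[OF bound[of j] norm_ge_zero[of v]] by linarith
  then show "norm (T_inf A B Bw Qi Ri K s *v v) \<le> \<beta> * norm v"
    by (intro LIMSEQ_le_const2[OF T]) blast
qed

lemma limit_not_eigenvalue:
  assumes lim: "Ks \<longlonglongrightarrow> K" and hur: "\<And>j. hurwitz (A + B ** Ks j)" and s: "0 \<le> Re s"
    and bound: "\<And>j. onorm (\<lambda>v. T_inf A B Bw Qi Ri (Ks j) s *v v) \<le> \<beta>"
    and pdQ: "pd_mat Qi" and pdW: "pd_mat (Bw ** transpose Bw)" and v: "v \<noteq> 0"
  shows "cmat (A + B ** K) *v v \<noteq> s *s v"
proof
  assume eig: "cmat (A + B ** K) *v v = s *s v"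
  let ?M = "\<lambda>K. mat s - cmat (A + B ** K)"
  obtain G where G: "Bw ** G = mat 1"
  proof
    have "invertible (Bw ** transpose Bw)"
      using pdW by (intro invertible_ker_zero) (metis pd_mat_def inner_zero_right less_irrefl)
    then show "Bw ** (transpose Bw ** matrix_inv (Bw ** transpose Bw)) = mat 1"
      by (simp add: matrix_mul_assoc invertible_matrix_inv)
  qed
  define u where "u j = cmat G *v (?M (Ks j) *v v)" for j
  have "(\<lambda>j. ?M (Ks j) *v v) \<longlonglongrightarrow> ?M K *v v" by (intro tendsto_intros lim)
  moreover have "?M K *v v = 0" using eig by (simp add: matrix_vector_mult_diff_rdistrib mat_matrix_vector_mult)
  ultimately have "u \<longlonglongrightarrow> 0" unfolding u_def using tendsto_matrix_vector_mult[OF tendsto_const] by fastforce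
  have Tu: "T_inf A B Bw Qi Ri (Ks j) s *v u j = cmat (out_mat Qi Ri (Ks j)) *v v" for j
  proof -
    have "cmat Bw *v u j = ?M (Ks j) *v v"
      by (simp add: u_def matrix_vector_mul_assoc matrix_mul_assoc cmat_mult[symmetric] G)
    then show ?thesis
      using hurwitz_resolvent_invertible[OF hur s]
      unfolding T_inf_apply by (simp add: matrix_vector_mul_assoc invertible_matrix_inv)
  qed
  have "cmat (msqrt Qi) *v v \<noteq> 0"
    using cmat_ker_zero[of "msqrt Qi" v] msqrt_mult_eq_0_iff[OF pdQ] v by blast
  then obtain i where i: "(cmat (msqrt Qi) *v v) $ i \<noteq> 0" by (metis vec_eq_iff zero_index)
  define \<kappa> where "\<kappa> = norm ((cmat (msqrt Qi) *v v) $ i)"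
  have "\<kappa> \<le> \<beta> * norm (u j)" for j
  proof -
    have "(cmat (out_mat Qi Ri (Ks j)) *v v) $ Inl i = (cmat (msqrt Qi) *v v) $ i"
      by (simp add: matrix_vector_mult_def out_mat_def)
    then have "\<kappa> \<le> norm (T_inf A B Bw Qi Ri (Ks j) s *v u j)"
      unfolding Tu \<kappa>_def by (metis Finite_Cartesian_Product.norm_nth_le)
    also have "\<dots> \<le> \<beta> * norm (u j)"
      using onorm[OF matrix_vector_mul_bounded_linear, of "T_inf A B Bw Qi Ri (Ks j) s" "u j"]
        mult_right_mono[OF bound[of j] norm_ge_zero[of "u j"]] by linarith
    finally show ?thesis .
  qed
  moreover have "(\<lambda>j. \<beta> * norm (u j)) \<longlonglongrightarrow> 0"
    using \<open>u \<longlonglongrightarrow> 0\<close> by (intro tendsto_mult_right_zero tendsto_norm_zero)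
  ultimately have "\<kappa> \<le> 0" by (intro LIMSEQ_le_const) blast+
  then show False using i by (simp add: \<kappa>_def)
qed

lemma uniform_limit_continuous_param:
  fixes h :: "'a::metric_space \<times> 'b::heine_borel \<Rightarrow> 'c::metric_space"
  assumes cont: "continuous_on UNIV h" and lim: "xs \<longlonglongrightarrow> x0" and C: "compact C"
  shows "uniform_limit C (\<lambda>j s. h (s, xs j)) (\<lambda>s. h (s, x0)) sequentially"
  unfolding uniform_limit_iff
proof (intro allI impI)
  fix e :: real assume "0 < e"
  have "uniformly_continuous_on (C \<times> cball x0 1) h"
    using C by (intro compact_uniformly_continuous continuous_on_subset[OF cont] compact_Times
        compact_cball) auto
  then obtain d where d: "0 < d"
    "\<And>p p'. p \<in> C \<times> cball x0 1 \<Longrightarrow> p' \<in> C \<times> cball x0 1 \<Longrightarrow> dist p' p < d \<Longrightarrow> dist (h p') (h p) < e"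
    using \<open>0 < e\<close> unfolding uniformly_continuous_on_def by metis
  have "\<forall>\<^sub>F j in sequentially. dist (xs j) x0 < min d 1" using d(1) by (intro tendstoD[OF lim]) simp
  then show "\<forall>\<^sub>F j in sequentially. \<forall>s\<in>C. dist (h (s, xs j)) (h (s, x0)) < e"
    by eventually_elim (auto intro!: d(2) simp: dist_Pair_Pair dist_commute)
qed

lemma hurwitz_limit_not_rhp_eigenvalue:
  fixes As :: "nat \<Rightarrow> real^'n^'n"
  assumes lim: "As \<longlonglongrightarrow> A0" and hur: "\<And>j. hurwitz (As j)"
    and v: "v \<noteq> 0" and c: "0 < Re c"
  shows "cmat A0 *v v \<noteq> c *s v"
proof
  assume eig: "cmat A0 *v v = c *s v"
  define S where "S = {s. 0 < Re s}"
  define g where "g s = det (mat s - cmat A0)" for s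
  have hol: "(\<lambda>s. det (mat s - cmat X)) holomorphic_on S" for X :: "real^'n^'n"
    unfolding det_def mat_minus_cmat_nth by (intro holomorphic_intros)
  have "(mat c - cmat A0) *v v = 0"
    using eig by (simp add: matrix_vector_mult_diff_rdistrib mat_matrix_vector_mult)
  then have "\<not> invertible (mat c - cmat A0)"
    using v by (metis invertible_matrix_inv(2) matrix_vector_mul_assoc matrix_vector_mul_lid
        matrix_vector_mult_0_right)
  then have "g c = 0" by (simp add: g_def invertible_det_nz)
  moreover have "g c \<noteq> 0"
  proof (rule Hurwitz_no_zeros[of S "\<lambda>j s. det (mat s - cmat (As j))" g])
    show "open S" "connected S" unfolding S_def
      by (auto intro: open_halfspace_Re_gt convex_connected convex_halfspace_Re_gt)
    show "(\<lambda>s. det (mat s - cmat (As j))) holomorphic_on S" "g holomorphic_on S" for j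
      unfolding g_def by (rule hol)+
    show "uniform_limit C (\<lambda>j s. det (mat s - cmat (As j))) g sequentially" if "compact C" for C
    proof -
      have "continuous_on UNIV (\<lambda>p::complex \<times> (real^'n^'n). det (mat (fst p) - cmat (snd p)))"
        unfolding det_def mat_minus_cmat_nth by (intro continuous_intros)
      from uniform_limit_continuous_param[OF this lim that] show ?thesis by (simp add: g_def[abs_def])
    qed
    show "det (mat s - cmat (As j)) \<noteq> 0" if "s \<in> S" for j s
      using hurwitz_resolvent_invertible[OF hur, of s j] that
      by (simp add: S_def invertible_det_nz)
    show "c \<in> S" using c by (simp add: S_def)
    obtain L where L: "0 < L" "\<And>v. norm (cmat A0 *v v) \<le> norm v * L"
      using bounded_linear.pos_bounded[OF matrix_vector_mul_bounded_linear] by blast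
    define R where "R = complex_of_real (L + 1)"
    have "norm R = L + 1" using L(1) unfolding R_def norm_of_real by simp
    have "invertible (mat R - cmat A0)"
    proof (rule invertible_ker_zero)
      fix u assume "(mat R - cmat A0) *v u = 0"
      then show "u = 0" using norm_resolvent_ge[OF L(2), of R u] \<open>norm R = L + 1\<close> by simp
    qed
    then have "g R \<noteq> 0" by (simp add: g_def invertible_det_nz)
    moreover have "R \<in> S" using L by (simp add: S_def R_def)
    ultimately show "\<not> g constant_on S"
      using \<open>g c = 0\<close> \<open>c \<in> S\<close> unfolding constant_on_def by metis
  qed
  ultimately show False by simp
qed

lemma hurwitz_limit:
  fixes As :: "nat \<Rightarrow> real^'n^'n"
  assumes "As \<longlonglongrightarrow> A0" "\<And>j. hurwitz (As j)"
    and "\<And>\<omega> v. v \<noteq> 0 \<Longrightarrow> cmat A0 *v v \<noteq> (\<i> * complex_of_real \<omega>) *s v"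
  shows "hurwitz A0"
  unfolding hurwitz_def
proof (intro allI impI)
  fix c and v :: "complex^'n" assume cv: "v \<noteq> 0 \<and> cmat A0 *v v = c *s v"
  have "Re c \<noteq> 0"
  proof
    assume "Re c = 0"
    then have "c = \<i> * complex_of_real (Im c)" by (simp add: complex_eq_iff)
    then show False using cv assms(3)[of v "Im c"] by simp
  qed
  moreover have "\<not> 0 < Re c" using hurwitz_limit_not_rhp_eigenvalue[OF assms(1,2)] cv by blast
  ultimately show "Re c < 0" by linarith
qed

theorem corollary1:
  fixes A :: "real^'n^'n" and B :: "real^'m^'n" and Bw :: "real^'n^'n"
    and Q2 Qi :: "real^'n^'n" and R2 Ri :: "real^'m^'m" and \<beta> :: real
  assumes "psd_mat Q2" and "pd_mat R2" and "pd_mat Qi" and "pd_mat Ri" and "\<beta> > 0"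
    and "stabilizable A B"
    and "detectable (msqrt Q2) A"
    and "\<beta> > (INF K\<in>stab_set A B. hinf_norm A B Bw Qi Ri K)"
    and "pd_mat (Bw ** transpose Bw)"
  shows "closure (K_beta A B Bw Qi Ri \<beta>) - K_beta A B Bw Qi Ri \<beta>
           \<subseteq> {K \<in> stab_set A B. hinf_norm A B Bw Qi Ri K = \<beta>}"
proof
  fix K assume K: "K \<in> closure (K_beta A B Bw Qi Ri \<beta>) - K_beta A B Bw Qi Ri \<beta>"
  then have "K \<in> closure (K_beta A B Bw Qi Ri \<beta>)" by blast
  then obtain Ks where Ks: "\<And>j. Ks j \<in> K_beta A B Bw Qi Ri \<beta>" and lim: "Ks \<longlonglongrightarrow> K"
    unfolding closure_sequential by blast
  have hur: "hurwitz (A + B ** Ks j)" for j using Ks by (simp add: K_beta_def stab_set_def)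
  have bound: "onorm (\<lambda>v. T_inf A B Bw Qi Ri (Ks j) (\<i> * complex_of_real \<omega>) *v v) \<le> \<beta>" for j \<omega>
    by (rule order_trans[OF onorm_T_inf_le_hinf_norm[OF hur]]) (use Ks[of j] in \<open>simp add: K_beta_def\<close>)
  have hurK: "hurwitz (A + B ** K)"
  proof (rule hurwitz_limit[OF _ hur])
    show "(\<lambda>j. A + B ** Ks j) \<longlonglongrightarrow> A + B ** K" by (intro tendsto_intros lim)
    show "cmat (A + B ** K) *v v \<noteq> (\<i> * complex_of_real \<omega>) *s v" if "v \<noteq> 0" for \<omega> v
      by (rule limit_not_eigenvalue[OF lim hur _ bound[where \<omega>=\<omega>] assms(3,9) that]) simp
  qed
  have "hinf_norm A B Bw Qi Ri K \<le> \<beta>"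
    unfolding hinf_norm_def
  proof (rule cSUP_least)
    show "onorm (\<lambda>v. T_inf A B Bw Qi Ri K (\<i> * complex_of_real \<omega>) *v v) \<le> \<beta>" for \<omega>
      using assms(5) by (intro onorm_T_inf_limit_le[OF lim hur hurK _ _ bound[where \<omega>=\<omega>]]) auto
  qed simp
  then show "K \<in> {K \<in> stab_set A B. hinf_norm A B Bw Qi Ri K = \<beta>}"
    using K hurK by (auto simp: K_beta_def stab_set_def)
qed

end
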